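(* Let $f:\mathbb{R}^n\to\mathbb{R}\cup\{+\infty\}$ be a polyhedral M-convex function with bounded $\operatorname{dom}_{\mathbb{R}} f$, $y\in\operatorname{dom}_{\mathbb{R}} f$, and $i,j,k\in N$ pairwise distinct. For every $\lambda>0$ with $\hat y:=y+\lambda(\chi_i-\chi_k)\in\operatorname{dom}_{\mathbb{R}} f$, we have $f'_{\mathbb{R}}(\hat y;i,j)\ge f'_{\mathbb{R}}(y;i,j)$. In particular, if $f'_{\mathbb{R}}(y;i,j)>\phi_{\mathbb{R}}(y)$ then $f'_{\mathbb{R}}(\hat y;i,j)>\phi_{\mathbb{R}}(y)$.
   Context: $N=\{1,\dots,n\}$; $\chi_i$ is the $i$-th unit vector. $\operatorname{dom}_{\mathbb{R}} f=\{x\in\mathbb{R}^n:f(x)<+\infty\}$. A polyhedral convex function $f:\mathbb{R}^n\to\mathbb{R}\cup\{+\infty\}$ (epigraph a polyhedron, $\operatorname{dom}_{\mathbb{R}} f\neq\emptyset$) is M-convex if for all $x,y\in\operatorname{dom}_{\mathbb{R}} f$ and every $i$ with $x(i)>y(i)$ there exist $j$ with $x(j)<y(j)$ and $\epsilon_0>0$ such that $f(x)+f(y)\ge f(x-\epsilon(\chi_i-\chi_j))+f(y+\epsilon(\chi_i-\chi_j))$ for all $\epsilon\in[0,\epsilon_0]$. For $x\in\operatorname{dom}_{\mathbb{R}} f$, $f'_{\mathbb{R}}(x;i,j)=\lim_{\alpha\downarrow0}(f(x+\alpha(\chi_i-\chi_j))-f(x))/\alpha$ (possibly $+\infty$), and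 $\phi_{\mathbb{R}}(x)=\min_{i,j\in N}f'_{\mathbb{R}}(x;i,j)$. *)

theory Defs
  imports "HOL-Analysis.Analysis" "HOL-Library.Extended_Real"
begin

text \<open>Vectors in R^n are modelled as real^'n, N = UNIV :: 'n set.
  Functions R^n -> R \<union> {+\<infinity>} are modelled as ereal-valued functions never equal to -\<infinity>.\<close>

definition unitv :: "'n::finite \<Rightarrow> real^'n" ("\<chi>v") where
  "unitv i = axis i 1"

definition domR :: "((real^('n::finite)) \<Rightarrow> ereal) \<Rightarrow> (real^'n) set" where
  "domR f = {x. f x < \<infinity>}"

definition epigraph :: "((real^('n::finite)) \<Rightarrow> ereal) \<Rightarrow> ((real^'n) \<times> real) set" where
  "epigraph f = {(x, t). f x \<le> ereal t}"

definition polyhedral_convex :: "((real^('n::finite)) \<Rightarrow> ereal) \<Rightarrow> bool" where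
  "polyhedral_convex f \<longleftrightarrow>
     (\<forall>x. f x \<noteq> -\<infinity>) \<and> polyhedron (epigraph f) \<and> domR f \<noteq> {}"

definition M_convex :: "((real^('n::finite)) \<Rightarrow> ereal) \<Rightarrow> bool" where
  "M_convex f \<longleftrightarrow> polyhedral_convex f \<and>
     (\<forall>x\<in>domR f. \<forall>y\<in>domR f. \<forall>i. x$i > y$i \<longrightarrow>
        (\<exists>j. x$j < y$j \<and> (\<exists>\<epsilon>0>0. \<forall>\<epsilon>\<in>{0..\<epsilon>0}.
           f x + f y \<ge> f (x - \<epsilon> *\<^sub>R (\<chi>v i - \<chi>v j)) + f (y + \<epsilon> *\<^sub>R (\<chi>v i - \<chi>v j)))))"

definition dirderiv :: "((real^('n::finite)) \<Rightarrow> ereal) \<Rightarrow> real^'n \<Rightarrow> 'n \<Rightarrow> 'n \<Rightarrow> ereal" where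
  "dirderiv f x i j =
     Lim (at_right (0::real)) (\<lambda>\<alpha>. (f (x + \<alpha> *\<^sub>R (\<chi>v i - \<chi>v j)) - f x) / ereal \<alpha>)"

definition phiR :: "((real^('n::finite)) \<Rightarrow> ereal) \<Rightarrow> real^'n \<Rightarrow> ereal" where
  "phiR f x = Min {dirderiv f x i j | i j. True}"

end

theory Submission
  imports Defs
begin

text \<open>Along d = \<chi>_i - \<chi>_j the function t \<mapsto> f(p + t d) is convex, so f'(p; i, j) is the infimum
  of its difference quotients. Comparing y with \<hat>y + \<alpha> d, the coordinate j is the only one where
  y is larger and i the only one where it is smaller, so the M-convex exchange must move along d:
  f(\<hat>y + (\<alpha> - \<epsilon>) d) + f(y + \<epsilon> d) \<le> f(\<hat>y + \<alpha> d) + f(y). Hence every step towards \<hat>y + \<alpha> d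
  costs at least as much as a step away from y, i.e. at least c \<epsilon> whenever c \<le> f'(y; i, j).
  Convexity turns this into f(\<hat>y + \<alpha> d) \<le> f(\<hat>y + \<beta> d) - c (\<beta> - \<alpha>) for 0 < \<alpha> < \<beta>, and closedness
  of the epigraph lets \<alpha> tend to 0, which bounds every difference quotient at \<hat>y from below by c.\<close>

lemma unitv_nth [simp]: "(\<chi>v a) $ m = (if m = a then 1 else 0)"
  by (simp add: unitv_def axis_def)

lemma polyhedral_convexD:
  assumes "polyhedral_convex f"
  shows "convex (epigraph f)" and "closed (epigraph f)" and "f x \<noteq> -\<infinity>"
  using assms polyhedron_imp_convex polyhedron_imp_closed unfolding polyhedral_convex_def by auto

lemma convex_epigraph_secant_bound:
  fixes f :: "real^'n::finite \<Rightarrow> ereal"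
  assumes cvx: "convex (epigraph f)" and "a < b" "b < c"
    and fa: "f (p + a *\<^sub>R d) = ereal A" and fc: "f (p + c *\<^sub>R d) = ereal C"
  shows "f (p + b *\<^sub>R d) \<le> ereal (((c - b) * A + (b - a) * C) / (c - a))"
proof -
  define u where "u = (b - a) / (c - a)"
  have u: "0 \<le> u" "0 \<le> 1 - u" "1 - u = (c - b) / (c - a)"
    using \<open>a < b\<close> \<open>b < c\<close> by (auto simp: u_def field_simps)
  have "u * (c - a) = b - a"
    using \<open>a < b\<close> \<open>b < c\<close> by (simp add: u_def)
  then have "(1 - u) * a + u * c = b"
    by (simp add: algebra_simps)
  have "(p + a *\<^sub>R d, A) \<in> epigraph f" "(p + c *\<^sub>R d, C) \<in> epigraph f"
    using fa fc by (auto simp: epigraph_def)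
  then have "(1 - u) *\<^sub>R (p + a *\<^sub>R d, A) + u *\<^sub>R (p + c *\<^sub>R d, C) \<in> epigraph f"
    using convexD[OF cvx] u(1,2) by auto
  moreover have "(1 - u) *\<^sub>R (p + a *\<^sub>R d) + u *\<^sub>R (p + c *\<^sub>R d) = p + ((1 - u) * a + u * c) *\<^sub>R d"
    by (simp add: algebra_simps)
  moreover have "(1 - u) * A + u * C = ((c - b) * A + (b - a) * C) / (c - a)"
    using u(3) by (simp add: u_def add_divide_distrib)
  ultimately show ?thesis
    using \<open>(1 - u) * a + u * c = b\<close> by (simp add: epigraph_def)
qed

lemma convex_epigraph_diff_quotient_mono:
  fixes f :: "real^'n::finite \<Rightarrow> ereal"
  assumes cvx: "convex (epigraph f)" and ninf: "\<And>x. f x \<noteq> -\<infinity>"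
    and fp: "f p = ereal P" and "0 < s" "s < t"
  shows "(f (p + s *\<^sub>R d) - f p) / ereal s \<le> (f (p + t *\<^sub>R d) - f p) / ereal t"
proof (cases "f (p + t *\<^sub>R d)")
  case (real T)
  have "f (p + s *\<^sub>R d) \<le> ereal (((t - s) * P + s * T) / t)"
    using convex_epigraph_secant_bound[OF cvx, of 0 s t p d P T] \<open>0 < s\<close> \<open>s < t\<close> fp real
    by simp
  moreover obtain S where fS: "f (p + s *\<^sub>R d) = ereal S"
    using calculation ninf by (cases "f (p + s *\<^sub>R d)") auto
  ultimately have "S * t \<le> (t - s) * P + s * T"
    using \<open>0 < s\<close> \<open>s < t\<close> by (simp add: field_simps)
  then have "(S - P) / s \<le> (T - P) / t"
    using \<open>0 < s\<close> \<open>s < t\<close> by (simp add: field_simps)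
  then show ?thesis
    using fS real fp \<open>0 < s\<close> \<open>s < t\<close> by simp
qed (use ninf fp \<open>0 < s\<close> \<open>s < t\<close> in auto)

lemma convex_epigraph_diff_quotient_tendsto_INF:
  fixes f :: "real^'n::finite \<Rightarrow> ereal" and d :: "real^'n"
  assumes cvx: "convex (epigraph f)" and ninf: "\<And>x. f x \<noteq> -\<infinity>" and fp: "f p = ereal P"
  defines "q \<equiv> \<lambda>t. (f (p + t *\<^sub>R d) - f p) / ereal t"
  shows "(q \<longlongrightarrow> (INF t\<in>{0<..}. q t)) (at_right 0)"
proof (rule order_tendstoI)
  fix a assume "a < (INF t\<in>{0<..}. q t)"
  then have "a < q t" if "t > 0" for t
    using that by (meson INF_lower greaterThan_iff less_le_trans)
  then show "\<forall>\<^sub>F t in at_right 0. a < q t"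
    by (rule eventually_mono[OF eventually_at_right_less]) auto
next
  fix a assume "(INF t\<in>{0<..}. q t) < a"
  then obtain t where "t > 0" "q t < a"
    by (auto simp: INF_less_iff)
  have "\<forall>\<^sub>F s in at_right 0. s < t"
    using \<open>t > 0\<close> eventually_at_right by fastforce
  then show "\<forall>\<^sub>F s in at_right 0. q s < a"
    using eventually_at_right_less
  proof eventually_elim
    case (elim s)
    then have "q s \<le> q t"
      unfolding q_def using convex_epigraph_diff_quotient_mono[OF cvx ninf fp] by auto
    then show ?case
      using \<open>q t < a\<close> by simp
  qed
qed

lemma dirderiv_eq_INF:
  assumes "convex (epigraph f)" and "\<And>x. f x \<noteq> -\<infinity>" and "x \<in> domR f"
  shows "dirderiv f x i j = (INF t\<in>{0<..}. (f (x + t *\<^sub>R (\<chi>v i - \<chi>v j)) - f x) / ereal t)"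
proof -
  obtain X where "f x = ereal X"
    using assms(2,3) unfolding domR_def by (cases "f x") auto
  then show ?thesis
    unfolding dirderiv_def
    using convex_epigraph_diff_quotient_tendsto_INF[OF assms(1,2)] by (intro tendsto_Lim) auto
qed

lemma exchange_secant_bound:
  fixes f :: "real^'n::finite \<Rightarrow> ereal"
  assumes cvx: "convex (epigraph f)" and ninf: "\<And>x. f x \<noteq> -\<infinity>"
    and fy: "f y = ereal Y" and fh: "f h = ereal H" and fB: "f (h + \<beta> *\<^sub>R d) = ereal B"
    and slope: "\<And>t. t > 0 \<Longrightarrow> ereal c \<le> (f (y + t *\<^sub>R d) - f y) / ereal t"
    and exch: "\<exists>\<epsilon>. 0 < \<epsilon> \<and> \<epsilon> \<le> \<alpha> \<and>
          f (h + (\<alpha> - \<epsilon>) *\<^sub>R d) + f (y + \<epsilon> *\<^sub>R d) \<le> f (h + \<alpha> *\<^sub>R d) + f y"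
    and "0 < \<alpha>" "\<alpha> < \<beta>"
  shows "f (h + \<alpha> *\<^sub>R d) \<le> ereal (B - c * (\<beta> - \<alpha>))"
proof -
  have "f (h + \<alpha> *\<^sub>R d) \<le> ereal (((\<beta> - \<alpha>) * H + \<alpha> * B) / \<beta>)"
    using convex_epigraph_secant_bound[OF cvx, of 0 \<alpha> \<beta> h d H B] \<open>0 < \<alpha>\<close> \<open>\<alpha> < \<beta>\<close> fh fB
    by simp
  then obtain A where fA: "f (h + \<alpha> *\<^sub>R d) = ereal A"
    using ninf by (cases "f (h + \<alpha> *\<^sub>R d)") auto
  from exch obtain \<epsilon> where "0 < \<epsilon>" "\<epsilon> \<le> \<alpha>"
    and ineq: "f (h + (\<alpha> - \<epsilon>) *\<^sub>R d) + f (y + \<epsilon> *\<^sub>R d) \<le> f (h + \<alpha> *\<^sub>R d) + f y"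
    by blast
  obtain G E where fG: "f (h + (\<alpha> - \<epsilon>) *\<^sub>R d) = ereal G" and fE: "f (y + \<epsilon> *\<^sub>R d) = ereal E"
    using ineq fA fy ninf
    by (cases "f (h + (\<alpha> - \<epsilon>) *\<^sub>R d)"; cases "f (y + \<epsilon> *\<^sub>R d)") auto
  have "ereal c \<le> ereal ((E - Y) / \<epsilon>)"
    using slope[OF \<open>0 < \<epsilon>\<close>] fE fy \<open>0 < \<epsilon>\<close> by simp
  then have "c * \<epsilon> \<le> E - Y"
    using \<open>0 < \<epsilon>\<close> by (simp add: field_simps)
  moreover have "G + E \<le> A + Y"
    using ineq fG fE fA fy by simp
  ultimately have "(\<beta> - \<alpha>) * G \<le> (\<beta> - \<alpha>) * (A - c * \<epsilon>)"
    using \<open>\<alpha> < \<beta>\<close> by (intro mult_left_mono) auto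
  moreover have "f (h + \<alpha> *\<^sub>R d) \<le> ereal (((\<beta> - \<alpha>) * G + \<epsilon> * B) / (\<beta> - (\<alpha> - \<epsilon>)))"
    using convex_epigraph_secant_bound[OF cvx, of "\<alpha> - \<epsilon>" \<alpha> \<beta> h d G B] \<open>0 < \<epsilon>\<close> \<open>\<alpha> < \<beta>\<close> fG fB
    by simp
  then have "A * (\<beta> - \<alpha> + \<epsilon>) \<le> (\<beta> - \<alpha>) * G + \<epsilon> * B"
    using fA \<open>0 < \<epsilon>\<close> \<open>\<alpha> < \<beta>\<close> by (simp add: field_simps)
  ultimately have "\<epsilon> * A \<le> \<epsilon> * (B - c * (\<beta> - \<alpha>))"
    by (simp add: algebra_simps)
  then show ?thesis
    using fA \<open>0 < \<epsilon>\<close> by simp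
qed

lemma exchange_diff_quotient_lower_bound:
  fixes f :: "real^'n::finite \<Rightarrow> ereal"
  assumes cvx: "convex (epigraph f)" and cl: "closed (epigraph f)" and ninf: "\<And>x. f x \<noteq> -\<infinity>"
    and fy: "f y = ereal Y" and fh: "f h = ereal H"
    and slope: "\<And>t. t > 0 \<Longrightarrow> ereal c \<le> (f (y + t *\<^sub>R d) - f y) / ereal t"
    and exch: "\<And>\<alpha>. \<alpha> > 0 \<Longrightarrow> f (h + \<alpha> *\<^sub>R d) < \<infinity> \<Longrightarrow> \<exists>\<epsilon>. 0 < \<epsilon> \<and> \<epsilon> \<le> \<alpha> \<and>
          f (h + (\<alpha> - \<epsilon>) *\<^sub>R d) + f (y + \<epsilon> *\<^sub>R d) \<le> f (h + \<alpha> *\<^sub>R d) + f y"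
    and "\<beta> > 0"
  shows "ereal c \<le> (f (h + \<beta> *\<^sub>R d) - f h) / ereal \<beta>"
proof (cases "f (h + \<beta> *\<^sub>R d)")
  case (real B)
  have eventually_in_epigraph:
    "\<forall>\<^sub>F \<alpha> in at_right 0. (h + \<alpha> *\<^sub>R d, B - c * (\<beta> - \<alpha>)) \<in> epigraph f"
  proof -
    have "\<forall>\<^sub>F \<alpha> in at_right 0. \<alpha> < \<beta>"
      using \<open>\<beta> > 0\<close> eventually_at_right by fastforce
    then show ?thesis
      using eventually_at_right_less
    proof eventually_elim
      case (elim \<alpha>)
      have "f (h + \<alpha> *\<^sub>R d) \<le> ereal (B - c * (\<beta> - \<alpha>))"
      proof (rule exchange_secant_bound[OF cvx ninf fy fh real slope])
        have "f (h + \<alpha> *\<^sub>R d) \<le> ereal (((\<beta> - \<alpha>) * H + \<alpha> * B) / \<beta>)"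
          using convex_epigraph_secant_bound[OF cvx, of 0 \<alpha> \<beta> h d H B] elim fh real
          by simp
        then have "f (h + \<alpha> *\<^sub>R d) < \<infinity>"
          by (rule le_less_trans) simp
        then show "\<exists>\<epsilon>. 0 < \<epsilon> \<and> \<epsilon> \<le> \<alpha> \<and>
            f (h + (\<alpha> - \<epsilon>) *\<^sub>R d) + f (y + \<epsilon> *\<^sub>R d) \<le> f (h + \<alpha> *\<^sub>R d) + f y"
          using exch elim by blast
      qed (use elim in auto)
      then show ?case
        by (simp add: epigraph_def)
    qed
  qed
  have "((\<lambda>\<alpha>. (h + \<alpha> *\<^sub>R d, B - c * (\<beta> - \<alpha>))) \<longlongrightarrow> (h + 0 *\<^sub>R d, B - c * (\<beta> - 0)))
      (at_right 0)"
    by (intro tendsto_intros)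
  then have "(h + 0 *\<^sub>R d, B - c * (\<beta> - 0)) \<in> epigraph f"
    using Lim_in_closed_set[OF cl eventually_in_epigraph] by simp
  then have "c \<le> (B - H) / \<beta>"
    using fh \<open>\<beta> > 0\<close> by (simp add: epigraph_def field_simps)
  then show ?thesis
    using real fh \<open>\<beta> > 0\<close> by simp
qed (use ninf fh \<open>\<beta> > 0\<close> in auto)

lemma M_convex_exchange_towards_shift:
  fixes f :: "real^'n::finite \<Rightarrow> ereal" and y :: "real^'n" and i j k :: 'n and lam :: real
  defines "d \<equiv> \<chi>v i - \<chi>v j" and "h \<equiv> y + lam *\<^sub>R (\<chi>v i - \<chi>v k)"
  assumes M: "M_convex f" and "y \<in> domR f" and "i \<noteq> j" and "0 \<le> lam" and "0 < \<alpha>"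
    and "h + \<alpha> *\<^sub>R d \<in> domR f"
  shows "\<exists>\<epsilon>. 0 < \<epsilon> \<and> \<epsilon> \<le> \<alpha> \<and>
    f (h + (\<alpha> - \<epsilon>) *\<^sub>R d) + f (y + \<epsilon> *\<^sub>R d) \<le> f (h + \<alpha> *\<^sub>R d) + f y"
proof -
  define x where "x = h + \<alpha> *\<^sub>R d"
  have x_nth: "x $ m = y $ m + lam * (\<chi>v i - \<chi>v k) $ m + \<alpha> * d $ m" for m
    unfolding x_def h_def by simp
  have "x $ j < y $ j"
    using x_nth[of j] \<open>i \<noteq> j\<close> \<open>0 \<le> lam\<close> \<open>0 < \<alpha>\<close> unfolding d_def by simp
  then obtain j' \<epsilon>0 where "y $ j' < x $ j'" and "\<epsilon>0 > 0"
    and exch: "\<forall>\<epsilon>\<in>{0..\<epsilon>0}.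
      f y + f x \<ge> f (y - \<epsilon> *\<^sub>R (\<chi>v j - \<chi>v j')) + f (x + \<epsilon> *\<^sub>R (\<chi>v j - \<chi>v j'))"
    using M \<open>y \<in> domR f\<close> \<open>h + \<alpha> *\<^sub>R d \<in> domR f\<close> unfolding M_convex_def x_def by blast
  have "j' = i"
  proof (rule ccontr)
    assume "j' \<noteq> i"
    then have "x $ j' \<le> y $ j'"
      using x_nth[of j'] \<open>0 \<le> lam\<close> \<open>0 < \<alpha>\<close> unfolding d_def by auto
    then show False
      using \<open>y $ j' < x $ j'\<close> by simp
  qed
  define \<epsilon> where "\<epsilon> = min \<epsilon>0 \<alpha>"
  have "0 < \<epsilon>" "\<epsilon> \<le> \<alpha>" "\<epsilon> \<in> {0..\<epsilon>0}"
    using \<open>\<epsilon>0 > 0\<close> \<open>0 < \<alpha>\<close> unfolding \<epsilon>_def by auto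
  then have "f (y - \<epsilon> *\<^sub>R (\<chi>v j - \<chi>v i)) + f (x + \<epsilon> *\<^sub>R (\<chi>v j - \<chi>v i)) \<le> f y + f x"
    using exch \<open>j' = i\<close> by blast
  moreover have "y - \<epsilon> *\<^sub>R (\<chi>v j - \<chi>v i) = y + \<epsilon> *\<^sub>R d"
    and "x + \<epsilon> *\<^sub>R (\<chi>v j - \<chi>v i) = h + (\<alpha> - \<epsilon>) *\<^sub>R d"
    unfolding d_def x_def by (simp_all add: algebra_simps)
  ultimately have "f (y + \<epsilon> *\<^sub>R d) + f (h + (\<alpha> - \<epsilon>) *\<^sub>R d) \<le> f y + f x"
    by simp
  then show ?thesis
    using \<open>0 < \<epsilon>\<close> \<open>\<epsilon> \<le> \<alpha>\<close> unfolding x_def by (auto simp: add.commute)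
qed

lemma M_convex_dirderiv_mono_shift:
  fixes f :: "real^'n::finite \<Rightarrow> ereal"
  assumes M: "M_convex f" and "y \<in> domR f" and "i \<noteq> j" and "0 \<le> lam"
    and "y + lam *\<^sub>R (\<chi>v i - \<chi>v k) \<in> domR f"
  shows "dirderiv f y i j \<le> dirderiv f (y + lam *\<^sub>R (\<chi>v i - \<chi>v k)) i j"
proof -
  define d where "d = \<chi>v i - \<chi>v j"
  define h where "h = y + lam *\<^sub>R (\<chi>v i - \<chi>v k)"
  have "h \<in> domR f"
    using assms(5) unfolding h_def .
  have cvx: "convex (epigraph f)" and cl: "closed (epigraph f)" and ninf: "\<And>x. f x \<noteq> -\<infinity>"
    using polyhedral_convexD M unfolding M_convex_def by auto
  obtain Y H where fy: "f y = ereal Y" and fh: "f h = ereal H"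
    using assms(2,5) ninf unfolding domR_def by (cases "f y"; cases "f h") (auto simp: h_def)
  have lower_bound: "ereal c \<le> dirderiv f h i j" if "ereal c \<le> dirderiv f y i j" for c
  proof -
    have slope: "ereal c \<le> (f (y + t *\<^sub>R d) - f y) / ereal t" if "t > 0" for t
    proof -
      have "dirderiv f y i j \<le> (f (y + t *\<^sub>R d) - f y) / ereal t"
        unfolding dirderiv_eq_INF[OF cvx ninf \<open>y \<in> domR f\<close>] d_def
        using \<open>t > 0\<close> by (intro INF_lower) simp
      then show ?thesis
        using \<open>ereal c \<le> dirderiv f y i j\<close> by (rule order_trans[rotated])
    qed
    have "ereal c \<le> (f (h + \<beta> *\<^sub>R d) - f h) / ereal \<beta>" if "\<beta> > 0" for \<beta>
    proof (rule exchange_diff_quotient_lower_bound[OF cvx cl ninf fy fh slope _ \<open>\<beta> > 0\<close>])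
      show "\<exists>\<epsilon>. 0 < \<epsilon> \<and> \<epsilon> \<le> \<alpha> \<and>
          f (h + (\<alpha> - \<epsilon>) *\<^sub>R d) + f (y + \<epsilon> *\<^sub>R d) \<le> f (h + \<alpha> *\<^sub>R d) + f y"
        if "\<alpha> > 0" and "f (h + \<alpha> *\<^sub>R d) < \<infinity>" for \<alpha>
        using M_convex_exchange_towards_shift[OF M \<open>y \<in> domR f\<close> \<open>i \<noteq> j\<close> \<open>0 \<le> lam\<close>] that
        unfolding d_def h_def domR_def by simp
    qed
    then show ?thesis
      unfolding dirderiv_eq_INF[OF cvx ninf \<open>h \<in> domR f\<close>] d_def
      by (intro INF_greatest) simp
  qed
  show ?thesis
  proof (rule ccontr)
    assume "\<not> ?thesis"
    then obtain c where "dirderiv f h i j < ereal c" "ereal c < dirderiv f y i j"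
      unfolding h_def using ereal_dense2 not_le by meson
    then show False
      using lower_bound[of c] by (meson leD less_imp_le)
  qed
qed

theorem mainTheorem15:
  fixes f :: "(real^('n::finite)) \<Rightarrow> ereal" and y :: "real^'n" and i j k :: 'n
  assumes "M_convex f"
    and "bounded (domR f)"
    and "y \<in> domR f"
    and "i \<noteq> j" and "j \<noteq> k" and "i \<noteq> k"
  shows "\<forall>lam>0. y + lam *\<^sub>R (\<chi>v i - \<chi>v k) \<in> domR f \<longrightarrow>
           dirderiv f (y + lam *\<^sub>R (\<chi>v i - \<chi>v k)) i j \<ge> dirderiv f y i j \<and>
           (dirderiv f y i j > phiR f y \<longrightarrow>
              dirderiv f (y + lam *\<^sub>R (\<chi>v i - \<chi>v k)) i j > phiR f y)"
proof (intro allI impI)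
  fix lam :: real
  assume "lam > 0" and "y + lam *\<^sub>R (\<chi>v i - \<chi>v k) \<in> domR f"
  then have "dirderiv f y i j \<le> dirderiv f (y + lam *\<^sub>R (\<chi>v i - \<chi>v k)) i j"
    using M_convex_dirderiv_mono_shift[OF assms(1,3,4)] by simp
  then show "dirderiv f (y + lam *\<^sub>R (\<chi>v i - \<chi>v k)) i j \<ge> dirderiv f y i j \<and>
      (dirderiv f y i j > phiR f y \<longrightarrow>
         dirderiv f (y + lam *\<^sub>R (\<chi>v i - \<chi>v k)) i j > phiR f y)"
    by auto
qed

end
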